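(* Suppose that $Q=Q_V$ has an optimal Hardy-weight $W$ in $\Omega$. If $V_1\in\widehat M^q_{loc}(p;\Omega)$ satisfies $V_1\ge-\varepsilon W$ for some $\varepsilon<1$, then $W+V_1$ is an optimal Hardy-weight of $Q_{V+V_1}$ in $\Omega$.
   Context: Fix $n\ge2$, $1<p<\infty$, a domain $\Omega\subseteq\mathbb{R}^n$. Standing assumptions: $H:\Omega\times\mathbb{R}^n\to[0,\infty)$, for a.e. $x$ a norm in $\xi$, measurable in $x$, locally uniformly equivalent to $|\cdot|$ on each subdomain $\omega\Subset\Omega$, uniformly convex and differentiable on $\mathbb{R}^n\setminus\{0\}$ for a.e. $x$; $\mathcal{A}(x,\xi)=\nabla_\xi(H(x,\xi)^p/p)\in C^1$ in $\xi\neq0$ for all $x$, with, on each domain $\omega\Subset\Omega$, $D_\xi\mathcal{A}(x,\xi)\eta\cdot\eta\ge\Lambda_{1,\omega}|\xi|^{p-2}|\eta|^2$, $|D_\xi\mathcal{A}(x,\xi)|\le\Lambda_{2,\omega}|\xi|^{p-2}$, $|\mathcal{A}(x,\xi)-\mathcal{A}(y,\xi)|\le\Lambda_{3,\omega}|\xi|^{p-1}|x-y|^{\vartheta_\omega}$ ($0<\vartheta_\omega\le1$). $V\in\widehat M^q_{loc}(p;\Omega)$, where for domains $\omega\Subset\Omega$: if $p<n$, $q>n/p$, $M^q(p;\omega)$ is defined by $\sup_{y\in\omega,0<r<\mathrm{diam}\,\omega}r^{-n/q'}\int_{\omega\cap B_r(y)}|f|<\infty$; if $p=n$, $q>n$,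 by the same with $(\log(\mathrm{diam}\,\omega/r))^{q/n'}$ in place of $r^{-n/q'}$; if $p>n$, $M^q(p;\omega)=L^1(\omega)$; $M^q_{loc}(p;\Omega)=\bigcap_\omega M^q(p;\omega)$; $\widehat M^q_{loc}$ additionally requires $q>n$ when $p<n$ and, when $p\ge n$, $\sup_{y,r}r^{-(n-p+\theta)}\int_{B_r(y)\cap\omega}|f|<\infty$ for some $\theta\in(p-1,p)$ and all domains $\omega\Subset\Omega$. $Q_V[\phi]=\int_\Omega(H(x,\nabla\phi)^p+V|\phi|^p)$ on $C_c^\infty(\Omega)$. Hardy-weight: $g\in L^1_{loc}$ with $Q_V[\phi]\ge C\int|g||\phi|^p$; $Q_V$ critical if its only Hardy-weight is $0$. For $Q\ge0$, a null-sequence is a nonnegative sequence in $W^{1,p}(\Omega)\cap C_c(\Omega)$ with $\|\phi_k\|_{L^p(U)}=1$ ($U\Subset\Omega$ fixed open) and $Q[\phi_k]\to0$; a ground state is a positive $W^{1,p}_{loc}$ function which is the $L^p_{loc}$ limit of a null-sequence (unique up to constant when $Q$ is critical). An optimal Hardy-weight of $Q_V$ in $\Omega$ is a nonnegative $W\in\widehat M^q_{loc}(p;\Omega)$ with $Q_{V-W}$ critical in $\Omega$ and ground state $\psi$ of $Q_{V-W}$ satisfying $\int_\Omega W\psi^p=\infty$. *)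

theory Defs
  imports "HOL-Analysis.Analysis"
begin

definition domain :: "(real^'n) set \<Rightarrow> bool" where
  "domain \<Omega> \<longleftrightarrow> open \<Omega> \<and> connected \<Omega> \<and> \<Omega> \<noteq> {}"

definition subdomain :: "(real^'n) set \<Rightarrow> (real^'n) set \<Rightarrow> bool" where
  "subdomain \<omega> \<Omega> \<longleftrightarrow> domain \<omega> \<and> compact (closure \<omega>) \<and> closure \<omega> \<subseteq> \<Omega>"

definition loc_integrable :: "(real^'n) set \<Rightarrow> (real^'n \<Rightarrow> 'b::{banach,second_countable_topology}) \<Rightarrow> bool" where
  "loc_integrable \<Omega> f \<longleftrightarrow> (\<forall>K. compact K \<and> K \<subseteq> \<Omega> \<longrightarrow> integrable (lebesgue_on K) f)"

definition grad :: "(real^'n \<Rightarrow> real) \<Rightarrow> real^'n \<Rightarrow> real^'n" where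
  "grad f x = (\<chi> i. frechet_derivative f (at x) (axis i 1))"

coinductive smooth :: "(real^'n \<Rightarrow> real) \<Rightarrow> bool" where
  "(\<forall>x. f differentiable (at x)) \<Longrightarrow> (\<forall>i. smooth (\<lambda>x. grad f x $ i)) \<Longrightarrow> smooth f"

definition tsupp :: "(real^'n \<Rightarrow> real) \<Rightarrow> (real^'n) set" where
  "tsupp f = closure {x. f x \<noteq> 0}"

definition test_fun :: "(real^'n) set \<Rightarrow> (real^'n \<Rightarrow> real) \<Rightarrow> bool" where
  "test_fun \<Omega> \<phi> \<longleftrightarrow> smooth \<phi> \<and> compact (tsupp \<phi>) \<and> tsupp \<phi> \<subseteq> \<Omega>"

definition cc_fun :: "(real^'n) set \<Rightarrow> (real^'n \<Rightarrow> real) \<Rightarrow> bool" where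
  "cc_fun \<Omega> \<phi> \<longleftrightarrow> continuous_on UNIV \<phi> \<and> compact (tsupp \<phi>) \<and> tsupp \<phi> \<subseteq> \<Omega>"

definition weak_grad :: "(real^'n) set \<Rightarrow> (real^'n \<Rightarrow> real) \<Rightarrow> (real^'n \<Rightarrow> real^'n) \<Rightarrow> bool" where
  "weak_grad \<Omega> u G \<longleftrightarrow> loc_integrable \<Omega> u \<and> loc_integrable \<Omega> G \<and>
     (\<forall>\<phi> i. test_fun \<Omega> \<phi> \<longrightarrow>
        integral\<^sup>L (lebesgue_on \<Omega>) (\<lambda>x. u x * grad \<phi> x $ i)
          = - integral\<^sup>L (lebesgue_on \<Omega>) (\<lambda>x. G x $ i * \<phi> x))"

definition W1p :: "real \<Rightarrow> (real^'n) set \<Rightarrow> (real^'n \<Rightarrow> real) \<Rightarrow> (real^'n \<Rightarrow> real^'n) \<Rightarrow> bool" where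
  "W1p p \<Omega> u G \<longleftrightarrow> weak_grad \<Omega> u G \<and> u \<in> borel_measurable (lebesgue_on \<Omega>) \<and>
     integrable (lebesgue_on \<Omega>) (\<lambda>x. \<bar>u x\<bar> powr p) \<and>
     integrable (lebesgue_on \<Omega>) (\<lambda>x. norm (G x) powr p)"

definition W1p_loc :: "real \<Rightarrow> (real^'n) set \<Rightarrow> (real^'n \<Rightarrow> real) \<Rightarrow> (real^'n \<Rightarrow> real^'n) \<Rightarrow> bool" where
  "W1p_loc p \<Omega> u G \<longleftrightarrow> weak_grad \<Omega> u G \<and>
     loc_integrable \<Omega> (\<lambda>x. \<bar>u x\<bar> powr p) \<and> loc_integrable \<Omega> (\<lambda>x. norm (G x) powr p)"

definition standing_H ::
  "real \<Rightarrow> (real^'n) set \<Rightarrow> (real^'n \<Rightarrow> real^'n \<Rightarrow> real) \<Rightarrow> bool" where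
  "standing_H p \<Omega> H \<longleftrightarrow>
     (\<forall>x\<in>\<Omega>. \<forall>\<xi>. H x \<xi> \<ge> 0) \<and>
     \<comment> \<open>norm in xi for a.e. x\<close>
     (AE x in lebesgue. x \<in> \<Omega> \<longrightarrow>
        (\<forall>\<xi> \<eta>. H x (\<xi> + \<eta>) \<le> H x \<xi> + H x \<eta>) \<and>
        (\<forall>c \<xi>. H x (c *\<^sub>R \<xi>) = \<bar>c\<bar> * H x \<xi>) \<and>
        (\<forall>\<xi>. H x \<xi> = 0 \<longrightarrow> \<xi> = 0)) \<and>
     \<comment> \<open>measurable in x\<close>
     (\<forall>\<xi>. (\<lambda>x. H x \<xi>) \<in> borel_measurable (lebesgue_on \<Omega>)) \<and>
     \<comment> \<open>locally uniformly equivalent to the Euclidean norm\<close>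
     (\<forall>\<omega>. subdomain \<omega> \<Omega> \<longrightarrow> (\<exists>c C. 0 < c \<and> 0 < C \<and>
        (AE x in lebesgue. x \<in> \<omega> \<longrightarrow> (\<forall>\<xi>. c * norm \<xi> \<le> H x \<xi> \<and> H x \<xi> \<le> C * norm \<xi>)))) \<and>
     \<comment> \<open>uniformly convex and differentiable off the origin, for a.e. x\<close>
     (AE x in lebesgue. x \<in> \<Omega> \<longrightarrow>
        (\<forall>e>0. \<exists>d>0. \<forall>\<xi> \<eta>. H x \<xi> = 1 \<and> H x \<eta> = 1 \<and> H x (\<xi> - \<eta>) \<ge> e
            \<longrightarrow> H x ((1/2) *\<^sub>R (\<xi> + \<eta>)) \<le> 1 - d) \<and>
        (\<forall>\<xi>. \<xi> \<noteq> 0 \<longrightarrow> H x differentiable (at \<xi>))) \<and>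
     \<comment> \<open>the vector field A = grad_xi (H^p/p), its derivative DA, and their bounds\<close>
     (\<exists>A :: real^'n \<Rightarrow> real^'n \<Rightarrow> real^'n. \<exists>DA :: real^'n \<Rightarrow> real^'n \<Rightarrow> real^'n^'n.
        (\<forall>x\<in>\<Omega>. \<forall>\<xi>. \<xi> \<noteq> 0 \<longrightarrow>
            ((\<lambda>\<zeta>. H x \<zeta> powr p / p) has_derivative (\<lambda>\<eta>. A x \<xi> \<bullet> \<eta>)) (at \<xi>)) \<and>
        (\<forall>x\<in>\<Omega>. (\<forall>\<xi>. \<xi> \<noteq> 0 \<longrightarrow> (A x has_derivative (\<lambda>\<eta>. DA x \<xi> *v \<eta>)) (at \<xi>)) \<and>
                 continuous_on (UNIV - {0}) (DA x)) \<and>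
        (\<forall>\<omega>. subdomain \<omega> \<Omega> \<longrightarrow> (\<exists>\<Lambda>1 \<Lambda>2 \<Lambda>3 th. 0 < \<Lambda>1 \<and> 0 < \<Lambda>2 \<and> 0 < \<Lambda>3 \<and>
            0 < th \<and> th \<le> 1 \<and>
            (\<forall>x\<in>\<omega>. \<forall>\<xi> \<eta>. \<xi> \<noteq> 0 \<longrightarrow>
                (DA x \<xi> *v \<eta>) \<bullet> \<eta> \<ge> \<Lambda>1 * norm \<xi> powr (p - 2) * (norm \<eta>)\<^sup>2 \<and>
                norm (DA x \<xi>) \<le> \<Lambda>2 * norm \<xi> powr (p - 2)) \<and>
            (\<forall>x\<in>\<omega>. \<forall>y\<in>\<omega>. \<forall>\<xi>. \<xi> \<noteq> 0 \<longrightarrow>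
                norm (A x \<xi> - A y \<xi>) \<le> \<Lambda>3 * norm \<xi> powr (p - 1) * dist x y powr th))))"

definition ball_mass :: "(real^'n \<Rightarrow> real) \<Rightarrow> (real^'n) set \<Rightarrow> real^'n \<Rightarrow> real \<Rightarrow> ennreal" where
  "ball_mass f \<omega> y r = nn_integral (lebesgue_on (\<omega> \<inter> ball y r)) (\<lambda>x. ennreal \<bar>f x\<bar>)"

definition Mq :: "real \<Rightarrow> real \<Rightarrow> (real^'n) set \<Rightarrow> (real^'n \<Rightarrow> real) \<Rightarrow> bool" where
  "Mq p q \<omega> f \<longleftrightarrow> f \<in> borel_measurable (lebesgue_on \<omega>) \<and>
     (let n = real CARD('n); q' = q / (q - 1); n' = n / (n - 1) in
      if p < n then
        q > n / p \<and> (\<exists>C. \<forall>y\<in>\<omega>. \<forall>r. 0 < r \<and> r < diameter \<omega> \<longrightarrow>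
            ennreal (r powr (- (n / q'))) * ball_mass f \<omega> y r \<le> ennreal C)
      else if p = n then
        q > n \<and> (\<exists>C. \<forall>y\<in>\<omega>. \<forall>r. 0 < r \<and> r < diameter \<omega> \<longrightarrow>
            ennreal (ln (diameter \<omega> / r) powr (q / n')) * ball_mass f \<omega> y r \<le> ennreal C)
      else integrable (lebesgue_on \<omega>) f)"

definition Mq_loc :: "real \<Rightarrow> real \<Rightarrow> (real^'n) set \<Rightarrow> (real^'n \<Rightarrow> real) \<Rightarrow> bool" where
  "Mq_loc p q \<Omega> f \<longleftrightarrow> (\<forall>\<omega>. subdomain \<omega> \<Omega> \<longrightarrow> Mq p q \<omega> f)"

definition Mq_hat_loc :: "real \<Rightarrow> real \<Rightarrow> (real^'n) set \<Rightarrow> (real^'n \<Rightarrow> real) \<Rightarrow> bool" where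
  "Mq_hat_loc p q \<Omega> f \<longleftrightarrow> Mq_loc p q \<Omega> f \<and>
     (let n = real CARD('n) in
       (p < n \<longrightarrow> q > n) \<and>
       (p \<ge> n \<longrightarrow> (\<exists>\<theta>. p - 1 < \<theta> \<and> \<theta> < p \<and>
          (\<forall>\<omega>. subdomain \<omega> \<Omega> \<longrightarrow> (\<exists>C. \<forall>y\<in>\<omega>. \<forall>r. 0 < r \<and> r < diameter \<omega> \<longrightarrow>
             ennreal (r powr (- (n - p + \<theta>))) * ball_mass f \<omega> y r \<le> ennreal C)))))"

definition QV :: "(real^'n \<Rightarrow> real^'n \<Rightarrow> real) \<Rightarrow> real \<Rightarrow> (real^'n \<Rightarrow> real) \<Rightarrow> (real^'n) set
                   \<Rightarrow> (real^'n \<Rightarrow> real) \<Rightarrow> (real^'n \<Rightarrow> real^'n) \<Rightarrow> real" where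
  "QV H p V \<Omega> u G = integral\<^sup>L (lebesgue_on \<Omega>) (\<lambda>x. H x (G x) powr p + V x * \<bar>u x\<bar> powr p)"

definition hardy_weight :: "(real^'n \<Rightarrow> real^'n \<Rightarrow> real) \<Rightarrow> real \<Rightarrow> (real^'n \<Rightarrow> real) \<Rightarrow> (real^'n) set
                   \<Rightarrow> (real^'n \<Rightarrow> real) \<Rightarrow> bool" where
  "hardy_weight H p V \<Omega> g \<longleftrightarrow> loc_integrable \<Omega> g \<and>
     (\<exists>C>0. \<forall>\<phi>. test_fun \<Omega> \<phi> \<longrightarrow>
        QV H p V \<Omega> \<phi> (grad \<phi>) \<ge> C * integral\<^sup>L (lebesgue_on \<Omega>) (\<lambda>x. \<bar>g x\<bar> * \<bar>\<phi> x\<bar> powr p))"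

definition critical :: "(real^'n \<Rightarrow> real^'n \<Rightarrow> real) \<Rightarrow> real \<Rightarrow> (real^'n \<Rightarrow> real) \<Rightarrow> (real^'n) set \<Rightarrow> bool" where
  "critical H p V \<Omega> \<longleftrightarrow> hardy_weight H p V \<Omega> (\<lambda>x. 0) \<and>
     (\<forall>g. hardy_weight H p V \<Omega> g \<longrightarrow> (AE x in lebesgue_on \<Omega>. g x = 0))"

definition null_sequence :: "(real^'n \<Rightarrow> real^'n \<Rightarrow> real) \<Rightarrow> real \<Rightarrow> (real^'n \<Rightarrow> real) \<Rightarrow> (real^'n) set
                   \<Rightarrow> (real^'n) set \<Rightarrow> (nat \<Rightarrow> real^'n \<Rightarrow> real) \<Rightarrow> bool" where
  "null_sequence H p V \<Omega> U \<phi> \<longleftrightarrow>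
     (\<exists>G. (\<forall>k. W1p p \<Omega> (\<phi> k) (G k) \<and> cc_fun \<Omega> (\<phi> k) \<and> (\<forall>x. \<phi> k x \<ge> 0) \<and>
             integral\<^sup>L (lebesgue_on U) (\<lambda>x. \<bar>\<phi> k x\<bar> powr p) = 1) \<and>
          (\<lambda>k. QV H p V \<Omega> (\<phi> k) (G k)) \<longlonglongrightarrow> 0)"

definition ground_state :: "(real^'n \<Rightarrow> real^'n \<Rightarrow> real) \<Rightarrow> real \<Rightarrow> (real^'n \<Rightarrow> real) \<Rightarrow> (real^'n) set
                   \<Rightarrow> (real^'n \<Rightarrow> real) \<Rightarrow> bool" where
  "ground_state H p V \<Omega> \<psi> \<longleftrightarrow>
     (\<forall>x\<in>\<Omega>. \<psi> x > 0) \<and> (\<exists>G. W1p_loc p \<Omega> \<psi> G) \<and>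
     (\<exists>U \<phi>. open U \<and> compact (closure U) \<and> closure U \<subseteq> \<Omega> \<and>
        null_sequence H p V \<Omega> U \<phi> \<and>
        (\<forall>K. compact K \<and> K \<subseteq> \<Omega> \<longrightarrow>
           (\<lambda>k. integral\<^sup>L (lebesgue_on K) (\<lambda>x. \<bar>\<phi> k x - \<psi> x\<bar> powr p)) \<longlonglongrightarrow> 0))"

definition optimal_hardy_weight :: "(real^'n \<Rightarrow> real^'n \<Rightarrow> real) \<Rightarrow> real \<Rightarrow> real \<Rightarrow> (real^'n \<Rightarrow> real)
                   \<Rightarrow> (real^'n) set \<Rightarrow> (real^'n \<Rightarrow> real) \<Rightarrow> bool" where
  "optimal_hardy_weight H p q V \<Omega> W \<longleftrightarrow>
     (\<forall>x\<in>\<Omega>. W x \<ge> 0) \<and> Mq_hat_loc p q \<Omega> W \<and>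
     critical H p (\<lambda>x. V x - W x) \<Omega> \<and>
     (\<exists>\<psi>. ground_state H p (\<lambda>x. V x - W x) \<Omega> \<psi> \<and>
        nn_integral (lebesgue_on \<Omega>) (\<lambda>x. ennreal (W x * \<psi> x powr p)) = \<infinity>)"

end

theory Submission
  imports Defs
begin

text \<open>Replacing \<open>V, W\<close> by \<open>V + V\<^sub>1, W + V\<^sub>1\<close> leaves the potential \<open>V - W\<close> of the critical
  functional unchanged, so criticality and the ground state \<open>\<psi>\<close> carry over verbatim. It remains
  that \<open>W + V\<^sub>1\<close> is an admissible weight, which holds because the Morrey-type classes are closed
  under addition, and that \<open>\<integral> (W + V\<^sub>1) \<psi>\<^sup>p = \<infinity>\<close>, which follows from
  \<open>W + V\<^sub>1 \<ge> (1 - \<epsilon>) W \<ge> 0\<close>.\<close>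

definition morrey_bounded :: "(real \<Rightarrow> real) \<Rightarrow> (real^'n) set \<Rightarrow> (real^'n \<Rightarrow> real) \<Rightarrow> bool" where
  "morrey_bounded w \<omega> f \<longleftrightarrow> (\<exists>C. \<forall>y\<in>\<omega>. \<forall>r. 0 < r \<and> r < diameter \<omega> \<longrightarrow>
     ennreal (w r) * ball_mass f \<omega> y r \<le> ennreal C)"

lemma ball_mass_add_le:
  assumes "f \<in> borel_measurable (lebesgue_on \<omega>)" and "g \<in> borel_measurable (lebesgue_on \<omega>)"
  shows "ball_mass (\<lambda>x. f x + g x) \<omega> y r \<le> ball_mass f \<omega> y r + ball_mass g \<omega> y r"
proof -
  let ?M = "lebesgue_on (\<omega> \<inter> ball y r)"
  have f: "f \<in> borel_measurable ?M" and g: "g \<in> borel_measurable ?M"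
    using assms measurable_restrict_mono by blast+
  have "(\<integral>\<^sup>+x. ennreal \<bar>f x + g x\<bar> \<partial>?M) \<le> (\<integral>\<^sup>+x. ennreal \<bar>f x\<bar> + ennreal \<bar>g x\<bar> \<partial>?M)"
    by (intro nn_integral_mono)
       (simp add: ennreal_plus[symmetric] abs_triangle_ineq ennreal_leI del: ennreal_plus)
  also have "\<dots> = (\<integral>\<^sup>+x. ennreal \<bar>f x\<bar> \<partial>?M) + (\<integral>\<^sup>+x. ennreal \<bar>g x\<bar> \<partial>?M)"
    using f g by (intro nn_integral_add) auto
  finally show ?thesis
    unfolding ball_mass_def .
qed

lemma morrey_bounded_add:
  assumes "f \<in> borel_measurable (lebesgue_on \<omega>)" and "g \<in> borel_measurable (lebesgue_on \<omega>)"
    and "morrey_bounded w \<omega> f" and "morrey_bounded w \<omega> g"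
  shows "morrey_bounded w \<omega> (\<lambda>x. f x + g x)"
proof -
  obtain C1 C2 where
    C1: "\<And>y r. y \<in> \<omega> \<Longrightarrow> 0 < r \<and> r < diameter \<omega> \<Longrightarrow> ennreal (w r) * ball_mass f \<omega> y r \<le> ennreal C1" and
    C2: "\<And>y r. y \<in> \<omega> \<Longrightarrow> 0 < r \<and> r < diameter \<omega> \<Longrightarrow> ennreal (w r) * ball_mass g \<omega> y r \<le> ennreal C2"
    using assms(3,4) unfolding morrey_bounded_def by metis
  have "ennreal (w r) * ball_mass (\<lambda>x. f x + g x) \<omega> y r \<le> ennreal (max C1 0 + max C2 0)"
    if "y \<in> \<omega>" "0 < r \<and> r < diameter \<omega>" for y r
  proof -
    have "ennreal (w r) * ball_mass (\<lambda>x. f x + g x) \<omega> y r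
        \<le> ennreal (w r) * ball_mass f \<omega> y r + ennreal (w r) * ball_mass g \<omega> y r"
      using ball_mass_add_le[OF assms(1,2)] by (metis distrib_left mult_left_mono zero_le)
    also have "\<dots> \<le> ennreal C1 + ennreal C2"
      using C1 C2 that by (intro add_mono)
    also have "\<dots> = ennreal (max C1 0 + max C2 0)"
      by (subst ennreal_plus) (auto simp: max_def ennreal_neg)
    finally show ?thesis .
  qed
  then show ?thesis
    unfolding morrey_bounded_def by blast
qed

lemma morrey_bounded_weight_le:
  assumes "morrey_bounded w \<omega> f" and "0 \<le> c"
    and "\<And>r. 0 < r \<Longrightarrow> r < diameter \<omega> \<Longrightarrow> w' r \<le> c * w r"
  shows "morrey_bounded w' \<omega> f"
proof -
  obtain C where C: "\<And>y r. y \<in> \<omega> \<Longrightarrow> 0 < r \<and> r < diameter \<omega> \<Longrightarrow> ennreal (w r) * ball_mass f \<omega> y r \<le> ennreal C"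
    using assms(1) unfolding morrey_bounded_def by metis
  have "ennreal (w' r) * ball_mass f \<omega> y r \<le> ennreal (c * max C 0)"
    if "y \<in> \<omega>" "0 < r \<and> r < diameter \<omega>" for y r
  proof -
    have "ennreal (w' r) * ball_mass f \<omega> y r \<le> ennreal (c * w r) * ball_mass f \<omega> y r"
      using assms(3) that by (intro mult_right_mono ennreal_leI) auto
    also have "\<dots> = ennreal c * (ennreal (w r) * ball_mass f \<omega> y r)"
      using \<open>0 \<le> c\<close> by (simp add: ennreal_mult' mult.assoc)
    also have "\<dots> \<le> ennreal c * ennreal (max C 0)"
      using C[OF that] by (intro mult_left_mono) (auto intro: order.trans ennreal_leI)
    also have "\<dots> = ennreal (c * max C 0)"
      using \<open>0 \<le> c\<close> by (simp add: ennreal_mult)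
    finally show ?thesis .
  qed
  then show ?thesis
    unfolding morrey_bounded_def by blast
qed

lemma morrey_bounded_powr_mono:
  assumes "morrey_bounded (\<lambda>r. r powr - s') \<omega> f" and "s \<le> s'"
  shows "morrey_bounded (\<lambda>r. r powr - s) \<omega> f"
proof (rule morrey_bounded_weight_le[OF assms(1), of "diameter \<omega> powr (s' - s)"])
  fix r :: real assume r: "0 < r" "r < diameter \<omega>"
  have "r powr - s = r powr (s' - s) * r powr - s'"
    by (simp add: powr_add[symmetric])
  also have "\<dots> \<le> diameter \<omega> powr (s' - s) * r powr - s'"
    using r \<open>s \<le> s'\<close> by (intro mult_right_mono powr_mono2) auto
  finally show "r powr - s \<le> diameter \<omega> powr (s' - s) * r powr - s'" .
qed simp

lemma Mq_altdef:
  "Mq p q \<omega> f \<longleftrightarrow> f \<in> borel_measurable (lebesgue_on \<omega>) \<and>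
     (let n = real CARD('n) in
      if p < n then q > n / p \<and> morrey_bounded (\<lambda>r. r powr - (n / (q / (q - 1)))) \<omega> f
      else if p = n then q > n \<and> morrey_bounded (\<lambda>r. ln (diameter \<omega> / r) powr (q / (n / (n - 1)))) \<omega> f
      else integrable (lebesgue_on \<omega>) f)"
  for f :: "real^'n \<Rightarrow> real"
  unfolding Mq_def morrey_bounded_def Let_def by simp

lemma Mq_add:
  assumes "Mq p q \<omega> f" and "Mq p q \<omega> g"
  shows "Mq p q \<omega> (\<lambda>x. f x + g x)"
  using assms morrey_bounded_add[of f \<omega> g] unfolding Mq_altdef Let_def
  by (auto split: if_splits)

lemma Mq_hat_loc_altdef:
  "Mq_hat_loc p q \<Omega> f \<longleftrightarrow> Mq_loc p q \<Omega> f \<and>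
     (p < real CARD('n) \<longrightarrow> q > real CARD('n)) \<and>
     (p \<ge> real CARD('n) \<longrightarrow> (\<exists>\<theta>. p - 1 < \<theta> \<and> \<theta> < p \<and>
        (\<forall>\<omega>. subdomain \<omega> \<Omega> \<longrightarrow> morrey_bounded (\<lambda>r. r powr - (real CARD('n) - p + \<theta>)) \<omega> f)))"
  for f :: "real^'n \<Rightarrow> real"
  unfolding Mq_hat_loc_def morrey_bounded_def Let_def by simp

lemma Mq_hat_loc_add:
  fixes f g :: "real^'n \<Rightarrow> real"
  assumes f: "Mq_hat_loc p q \<Omega> f" and g: "Mq_hat_loc p q \<Omega> g"
  shows "Mq_hat_loc p q \<Omega> (\<lambda>x. f x + g x)"
proof -
  let ?n = "real CARD('n)"
  have measurable: "f \<in> borel_measurable (lebesgue_on \<omega>)" "g \<in> borel_measurable (lebesgue_on \<omega>)"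
    if "subdomain \<omega> \<Omega>" for \<omega>
    using f g that unfolding Mq_hat_loc_def Mq_loc_def Mq_def by auto
  have "\<exists>\<theta>. p - 1 < \<theta> \<and> \<theta> < p \<and>
      (\<forall>\<omega>. subdomain \<omega> \<Omega> \<longrightarrow> morrey_bounded (\<lambda>r. r powr - (?n - p + \<theta>)) \<omega> (\<lambda>x. f x + g x))"
    if "p \<ge> ?n"
  proof -
    obtain \<theta>f \<theta>g where \<theta>: "p - 1 < \<theta>f" "\<theta>f < p" "p - 1 < \<theta>g" "\<theta>g < p"
      and bf: "\<And>\<omega>. subdomain \<omega> \<Omega> \<Longrightarrow> morrey_bounded (\<lambda>r. r powr - (?n - p + \<theta>f)) \<omega> f"
      and bg: "\<And>\<omega>. subdomain \<omega> \<Omega> \<Longrightarrow> morrey_bounded (\<lambda>r. r powr - (?n - p + \<theta>g)) \<omega> g"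
      using f g \<open>p \<ge> ?n\<close> unfolding Mq_hat_loc_altdef by metis
    have "morrey_bounded (\<lambda>r. r powr - (?n - p + min \<theta>f \<theta>g)) \<omega> (\<lambda>x. f x + g x)"
      if "subdomain \<omega> \<Omega>" for \<omega>
    proof (rule morrey_bounded_add[OF measurable[OF that]])
      show "morrey_bounded (\<lambda>r. r powr - (?n - p + min \<theta>f \<theta>g)) \<omega> f"
        by (rule morrey_bounded_powr_mono[OF bf[OF that]]) simp
      show "morrey_bounded (\<lambda>r. r powr - (?n - p + min \<theta>f \<theta>g)) \<omega> g"
        by (rule morrey_bounded_powr_mono[OF bg[OF that]]) simp
    qed
    moreover have "p - 1 < min \<theta>f \<theta>g" "min \<theta>f \<theta>g < p"
      using \<theta> by auto
    ultimately show ?thesis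
      by blast
  qed
  moreover have "Mq_loc p q \<Omega> (\<lambda>x. f x + g x)"
    using f g unfolding Mq_hat_loc_def Mq_loc_def by (auto intro: Mq_add)
  ultimately show ?thesis
    using f unfolding Mq_hat_loc_altdef by blast
qed

text \<open>Unlike \<open>nn_integral_cmult\<close> this needs no measurability, which is not available for
  \<open>W \<psi>\<^sup>p\<close> on \<open>\<Omega>\<close>.\<close>

lemma nn_integral_cmult_le:
  fixes c :: ennreal
  shows "c * integral\<^sup>N M f \<le> (\<integral>\<^sup>+ x. c * f x \<partial>M)"
proof -
  have "c * integral\<^sup>N M f = (SUP g \<in> {g. simple_function M g \<and> g \<le> f}. c * integral\<^sup>S M g)"
    unfolding nn_integral_def by (simp add: SUP_mult_left_ennreal)
  also have "\<dots> \<le> (\<integral>\<^sup>+ x. c * f x \<partial>M)"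
  proof (rule SUP_least)
    fix g assume "g \<in> {g. simple_function M g \<and> g \<le> f}"
    then have g: "simple_function M g" "g \<le> f"
      by auto
    then have "c * integral\<^sup>S M g = integral\<^sup>S M (\<lambda>x. c * g x)"
      by simp
    also have "\<dots> \<le> (\<integral>\<^sup>+ x. c * f x \<partial>M)"
      unfolding nn_integral_def
      using g by (intro SUP_upper) (auto simp: le_fun_def intro: mult_left_mono)
    finally show "c * integral\<^sup>S M g \<le> (\<integral>\<^sup>+ x. c * f x \<partial>M)" .
  qed
  finally show ?thesis .
qed

lemma nn_integral_eq_top_if_cmult_le:
  fixes f g :: "'a \<Rightarrow> real"
  assumes "(\<integral>\<^sup>+ x. ennreal (f x) \<partial>M) = \<infinity>" and "0 < c"
    and "\<And>x. x \<in> space M \<Longrightarrow> c * f x \<le> g x"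
  shows "(\<integral>\<^sup>+ x. ennreal (g x) \<partial>M) = \<infinity>"
proof -
  have "\<infinity> = ennreal c * (\<integral>\<^sup>+ x. ennreal (f x) \<partial>M)"
    using assms(1,2) by (simp add: ennreal_mult_top)
  also have "\<dots> \<le> (\<integral>\<^sup>+ x. ennreal c * ennreal (f x) \<partial>M)"
    by (rule nn_integral_cmult_le)
  also have "\<dots> \<le> (\<integral>\<^sup>+ x. ennreal (g x) \<partial>M)"
    using assms(2,3) by (intro nn_integral_mono) (simp add: ennreal_mult'[symmetric] ennreal_leI)
  finally show ?thesis
    by (simp add: top_unique)
qed

theorem lemma3p11:
  fixes H :: "real^'n \<Rightarrow> real^'n \<Rightarrow> real"
    and V V1 W :: "real^'n \<Rightarrow> real"
    and \<Omega> :: "(real^'n) set"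
    and p q \<epsilon> :: real
  assumes "CARD('n) \<ge> 2"
    and "1 < p"
    and "domain \<Omega>"
    and "standing_H p \<Omega> H"
    and "Mq_hat_loc p q \<Omega> V"
    and "optimal_hardy_weight H p q V \<Omega> W"
    and "Mq_hat_loc p q \<Omega> V1"
    and "\<epsilon> < 1"
    and "\<forall>x\<in>\<Omega>. V1 x \<ge> - \<epsilon> * W x"
  shows "optimal_hardy_weight H p q (\<lambda>x. V x + V1 x) \<Omega> (\<lambda>x. W x + V1 x)"
proof -
  obtain \<psi> where W_nonneg: "\<forall>x\<in>\<Omega>. W x \<ge> 0" and W_Mq: "Mq_hat_loc p q \<Omega> W"
    and crit: "critical H p (\<lambda>x. V x - W x) \<Omega>"
    and ground: "ground_state H p (\<lambda>x. V x - W x) \<Omega> \<psi>"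
    and W_infinite: "(\<integral>\<^sup>+ x. ennreal (W x * \<psi> x powr p) \<partial>lebesgue_on \<Omega>) = \<infinity>"
    using assms(6) unfolding optimal_hardy_weight_def by blast
  have lower: "(1 - \<epsilon>) * W x \<le> W x + V1 x" if "x \<in> \<Omega>" for x
    using assms(9) that by (auto simp: algebra_simps)
  have nonneg: "\<forall>x\<in>\<Omega>. W x + V1 x \<ge> 0"
  proof
    fix x assume "x \<in> \<Omega>"
    then have "0 \<le> (1 - \<epsilon>) * W x"
      using W_nonneg assms(8) by simp
    with lower[OF \<open>x \<in> \<Omega>\<close>] show "W x + V1 x \<ge> 0"
      by linarith
  qed
  have "(1 - \<epsilon>) * (W x * \<psi> x powr p) \<le> (W x + V1 x) * \<psi> x powr p" if "x \<in> \<Omega>" for x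
    using lower[OF that] powr_ge_zero unfolding mult.assoc[symmetric] by (rule mult_right_mono)
  then have infinite: "(\<integral>\<^sup>+ x. ennreal ((W x + V1 x) * \<psi> x powr p) \<partial>lebesgue_on \<Omega>) = \<infinity>"
    using assms(8) by (intro nn_integral_eq_top_if_cmult_le[OF W_infinite, where c = "1 - \<epsilon>"]) auto
  have same_potential: "(\<lambda>x. V x + V1 x - (W x + V1 x)) = (\<lambda>x. V x - W x)"
    by simp
  show ?thesis
    unfolding optimal_hardy_weight_def same_potential
    using nonneg Mq_hat_loc_add[OF W_Mq assms(7)] crit ground infinite by blast
qed

end
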